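(* Let $\mathbb{X}$ be a $0$-dimensional Polish space, $(C^\varepsilon_i)_{(\varepsilon,i)\in2\times\omega}$ a comparing $1$-disjoint family of subsets of $\mathbb{X}$, $X$ a Polish space and $A\subseteq X\times X$ any relation. Then one of the following holds: (a) there is $c:X\to\omega$ with all $c^{-1}(\{n\})\in\mathbf{\Delta}^0_2(X)$ and $c(x)\neq c(y)$ for all $(x,y)\in A$; (b) there is a continuous $f:\mathbb{X}\to X$ with $(f(x),f(y))\in A$ for all $(x,y)\in\bigcup_iC^0_i\times C^1_i$.
   Context: A family $(C^\varepsilon_i)_{(\varepsilon,i)\in2\times\omega}$ of subsets of $\mathbb{X}$ is $1$-disjoint if its members are closed and pairwise disjoint. It is comparing if for each $q\in\omega$ there is a partition $(O^p_q)_{p\in\omega}$ of $\mathbb{X}$ into clopen sets such that for each $i$: if $q<i$ there is $p$ with $C^0_i\cup C^1_i\subseteq O^p_q$; and if $q\ge i$ then $C^\varepsilon_i\subseteq O^{2i+\varepsilon}_q$ for each $\varepsilon\in2$. *)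

theory Defs
  imports "HOL-Analysis.Analysis"
begin

definition Polish_space :: "'a topology \<Rightarrow> bool" where
  "Polish_space X \<longleftrightarrow> completely_metrizable_space X \<and> separable_space X"

text \<open>Families indexed by (eps, i) in 2 x omega, eps encoded as a natural number 0 or 1.\<close>
definition one_disjoint :: "'a topology \<Rightarrow> (nat \<Rightarrow> nat \<Rightarrow> 'a set) \<Rightarrow> bool" where
  "one_disjoint XX C \<longleftrightarrow>
     (\<forall>e<2. \<forall>i. closedin XX (C e i)) \<and>
     (\<forall>e<2. \<forall>i. \<forall>e'<2. \<forall>i'. (e, i) \<noteq> (e', i') \<longrightarrow> C e i \<inter> C e' i' = {})"

definition comparing :: "'a topology \<Rightarrow> (nat \<Rightarrow> nat \<Rightarrow> 'a set) \<Rightarrow> bool" where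
  "comparing XX C \<longleftrightarrow>
     (\<forall>q::nat. \<exists>Op :: nat \<Rightarrow> 'a set.
        (\<forall>p. openin XX (Op p) \<and> closedin XX (Op p)) \<and>
        (\<forall>p p'. p \<noteq> p' \<longrightarrow> Op p \<inter> Op p' = {}) \<and>
        (\<Union>p. Op p) = topspace XX \<and>
        (\<forall>i. (q < i \<longrightarrow> (\<exists>p. C 0 i \<union> C 1 i \<subseteq> Op p)) \<and>
             (i \<le> q \<longrightarrow> (\<forall>e<2. C e i \<subseteq> Op (2 * i + e)))))"

definition Delta02_in :: "'a topology \<Rightarrow> 'a set \<Rightarrow> bool" where
  "Delta02_in X S \<longleftrightarrow> fsigma_in X S \<and> gdelta_in X S"

end

theory Submission
  imports Defs
begin

text \<open>
  Call an open set \<open>U \<subseteq> X\<close> good if \<open>A \<inter> (U \<times> U)\<close> admits a colouring by countably many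
  \<open>\<Delta>\<^sup>0\<^sub>2\<close> classes. By second countability the union \<open>G\<close> of all good open sets is again
  good. If \<open>G = X\<close> we are in case (a). Otherwise \<open>F = X - G\<close> is a nonempty set in which every
  open neighbourhood of every point contains an \<open>A\<close>-edge of \<open>F\<close>: an open set without such an
  edge would be good after painting its part outside \<open>G\<close> with one new colour.

  For (b) we build locally constant maps \<open>g\<^sub>q : \<bbbX> \<rightarrow> F\<close> whose values depend only on the pieces
  of the first \<open>q\<close> clopen partitions \<open>O\<^sub>0, \<dots>, O\<^sub>q\<^sub>-\<^sub>1\<close> of the comparing family. The sets
  \<open>C\<^sup>0\<^sub>q \<union> C\<^sup>1\<^sub>q\<close> lie in a single such cell, on which \<open>g\<^sub>q\<close> has some value \<open>v \<in> F\<close>; the partition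
  \<open>O\<^sub>q\<close> splits \<open>C\<^sup>0\<^sub>q\<close> from \<open>C\<^sup>1\<^sub>q\<close>, so \<open>g\<^sub>q\<^sub>+\<^sub>1\<close> may send them to the two ends of an edge
  \<open>(a, b) \<in> A\<close> that is \<open>2\<^sup>-\<^sup>q\<close>-close to \<open>v\<close>. Later steps never move the points of
  \<open>C\<^sup>\<epsilon>\<^sub>i\<close> with \<open>i < q\<close> again, and the uniform limit of the \<open>g\<^sub>q\<close> is the required map.
\<close>

lemma Delta02_in_openin: "metrizable_space X \<Longrightarrow> openin X U \<Longrightarrow> Delta02_in X U"
  by (simp add: Delta02_in_def open_imp_fsigma_in open_imp_gdelta_in)

lemma Delta02_in_closedin: "metrizable_space X \<Longrightarrow> closedin X U \<Longrightarrow> Delta02_in X U"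
  by (simp add: Delta02_in_def closed_imp_fsigma_in closed_imp_gdelta_in)

lemma Delta02_in_Int: "Delta02_in X S \<Longrightarrow> Delta02_in X T \<Longrightarrow> Delta02_in X (S \<inter> T)"
  by (simp add: Delta02_in_def fsigma_in_Int gdelta_in_Int)

lemma metrizable_separable_imp_second_countable:
  assumes "metrizable_space X" "separable_space X"
  shows "second_countable X"
proof -
  obtain M d where "Metric_space M d" and X: "X = Metric_space.mtopology M d"
    using assms(1) metrizable_space_def by blast
  then interpret M: Metric_space M d by blast
  obtain D where D: "countable D" "D \<subseteq> M" "M.mtopology closure_of D = M"
    using assms(2) unfolding separable_space_def X by auto
  define \<B> where "\<B> = (\<lambda>(c, n). M.mball c (inverse (Suc n))) ` (D \<times> (UNIV :: nat set))"
  have "\<exists>V\<in>\<B>. x \<in> V \<and> V \<subseteq> U" if U: "openin M.mtopology U" "x \<in> U" for U x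
  proof -
    have "x \<in> M"
      using U M.openin_mtopology by blast
    obtain r where r: "r > 0" "M.mball x r \<subseteq> U"
      using U unfolding M.openin_mtopology by blast
    obtain n :: nat where n: "inverse (Suc n) < r/2"
      using r(1) reals_Archimedean[of "r/2"] by auto
    have "x \<in> M.mtopology closure_of D"
      using D(3) \<open>x \<in> M\<close> by simp
    moreover have "(0::real) < inverse (Suc n)"
      by simp
    ultimately obtain c where c: "c \<in> D" "c \<in> M.mball x (inverse (Suc n))"
      unfolding M.metric_closure_of by blast
    have "M.mball c (inverse (Suc n)) \<subseteq> M.mball x r"
      by (rule M.mball_subset) (use c n \<open>x \<in> M\<close> in \<open>auto simp: M.commute\<close>)
    moreover have "x \<in> M.mball c (inverse (Suc n))"
      using c \<open>x \<in> M\<close> by (auto simp: M.commute)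
    moreover have "M.mball c (inverse (Suc n)) \<in> \<B>"
      unfolding \<B>_def using c(1) by auto
    ultimately show ?thesis
      using r by blast
  qed
  moreover have "countable \<B>" "\<forall>V\<in>\<B>. openin X V"
    unfolding \<B>_def X using D(1) by auto
  ultimately show ?thesis
    unfolding second_countable_def X by blast
qed

definition Delta02_colorable :: "'b topology \<Rightarrow> ('b \<times> 'b) set \<Rightarrow> 'b set \<Rightarrow> bool" where
  "Delta02_colorable X A U \<longleftrightarrow>
     (\<exists>c :: 'b \<Rightarrow> nat. (\<forall>n. Delta02_in X {x \<in> U. c x = n}) \<and>
                      (\<forall>(x, y)\<in>A. x \<in> U \<longrightarrow> y \<in> U \<longrightarrow> c x \<noteq> c y))"

lemma Delta02_colorable_empty: "Delta02_colorable X A {}"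
  by (auto simp: Delta02_colorable_def Delta02_in_def)

lemma Delta02_colorable_openin_subset:
  assumes "metrizable_space X" "Delta02_colorable X A U" "openin X V" "V \<subseteq> U"
  shows "Delta02_colorable X A V"
proof -
  obtain c :: "_ \<Rightarrow> nat" where c: "\<And>n. Delta02_in X {x \<in> U. c x = n}"
    "\<forall>(x, y)\<in>A. x \<in> U \<longrightarrow> y \<in> U \<longrightarrow> c x \<noteq> c y"
    using assms(2) unfolding Delta02_colorable_def by blast
  have "{x \<in> V. c x = n} = V \<inter> {x \<in> U. c x = n}" for n
    using assms(4) by auto
  then have "Delta02_in X {x \<in> V. c x = n}" for n
    using Delta02_in_Int Delta02_in_openin assms(1,3) c(1) by metis
  then show ?thesis
    using c(2) assms(4) unfolding Delta02_colorable_def by blast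
qed

lemma Delta02_colorable_UN:
  fixes U :: "nat \<Rightarrow> 'a set"
  assumes met: "metrizable_space X"
    and opn: "\<And>n. openin X (U n)" and col: "\<And>n. Delta02_colorable X A (U n)"
  shows "Delta02_colorable X A (\<Union>n. U n)"
proof -
  have "\<forall>n. \<exists>c :: 'a \<Rightarrow> nat. (\<forall>k. Delta02_in X {x \<in> U n. c x = k}) \<and>
      (\<forall>(x, y)\<in>A. x \<in> U n \<longrightarrow> y \<in> U n \<longrightarrow> c x \<noteq> c y)"
    using col unfolding Delta02_colorable_def by blast
  then obtain c :: "nat \<Rightarrow> 'a \<Rightarrow> nat" where c: "\<forall>n. (\<forall>k. Delta02_in X {x \<in> U n. c n x = k}) \<and>
      (\<forall>(x, y)\<in>A. x \<in> U n \<longrightarrow> y \<in> U n \<longrightarrow> c n x \<noteq> c n y)"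
    by (rule choice[THEN exE])
  then have c_classes: "\<And>n k. Delta02_in X {x \<in> U n. c n x = k}"
    and c_proper: "\<And>n x y. (x, y) \<in> A \<Longrightarrow> x \<in> U n \<Longrightarrow> y \<in> U n \<Longrightarrow> c n x \<noteq> c n y"
    by blast+
  define first where "first x = (LEAST n. x \<in> U n)" for x
  have first_in: "x \<in> U (first x)" "\<And>j. j < first x \<Longrightarrow> x \<notin> U j" if "x \<in> U i" for x i
    using that unfolding first_def by (auto intro: LeastI dest: not_less_Least)
  have first_unique: "first x = n" if "x \<in> U n" "\<And>j. j < n \<Longrightarrow> x \<notin> U j" for x n
    unfolding first_def by (rule Least_equality) (use that not_less in blast)+
  define colour where "colour x = prod_encode (first x, c (first x) x)" for x
  have "Delta02_in X {x \<in> (\<Union>n. U n). colour x = k}" for k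
  proof -
    obtain n m where k: "k = prod_encode (n, m)"
      by (metis prod_decode_inverse surj_pair)
    have "{x \<in> (\<Union>n. U n). colour x = k} = {x \<in> U n. c n x = m} \<inter> (topspace X - (\<Union>j<n. U j))"
    proof (intro set_eqI iffI)
      fix x assume "x \<in> {x \<in> (\<Union>n. U n). colour x = k}"
      then show "x \<in> {x \<in> U n. c n x = m} \<inter> (topspace X - (\<Union>j<n. U j))"
        using first_in openin_subset[OF opn] by (fastforce simp: colour_def k)
    next
      fix x assume "x \<in> {x \<in> U n. c n x = m} \<inter> (topspace X - (\<Union>j<n. U j))"
      then show "x \<in> {x \<in> (\<Union>n. U n). colour x = k}"
        using first_unique[of x n] by (auto simp: colour_def k)
    qed
    moreover have "closedin X (topspace X - (\<Union>j<n. U j))"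
      using opn by blast
    ultimately show ?thesis
      using Delta02_in_Int[OF c_classes Delta02_in_closedin[OF met]] by simp
  qed
  moreover have "colour x \<noteq> colour y" if "(x, y) \<in> A" "x \<in> U i" "y \<in> U j" for x y i j
    using first_in(1)[OF that(2)] first_in(1)[OF that(3)] c_proper[OF that(1)] by (auto simp: colour_def)
  ultimately show ?thesis
    unfolding Delta02_colorable_def by blast
qed

lemma Delta02_colorable_largest_open:
  assumes met: "metrizable_space X" and "separable_space X"
  shows "Delta02_colorable X A (\<Union>{U. openin X U \<and> Delta02_colorable X A U})"
proof -
  obtain \<B> where "countable \<B>" and \<B>_open: "\<forall>V\<in>\<B>. openin X V"
    and \<B>_base: "\<forall>U x. openin X U \<and> x \<in> U \<longrightarrow> (\<exists>V\<in>\<B>. x \<in> V \<and> V \<subseteq> U)"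
    using metrizable_separable_imp_second_countable[OF assms] unfolding second_countable_def by blast
  define \<V> where "\<V> = insert {} {V\<in>\<B>. Delta02_colorable X A V}"
  define V where "V = from_nat_into \<V>"
  have range_V: "range V = \<V>"
    unfolding V_def \<V>_def using \<open>countable \<B>\<close> by (intro range_from_nat_into) auto
  have good_V: "openin X (V n) \<and> Delta02_colorable X A (V n)" for n
  proof -
    have "V n \<in> \<V>"
      using range_V by blast
    then show ?thesis
      using \<B>_open Delta02_colorable_empty by (auto simp: \<V>_def)
  qed
  have "\<Union>{U. openin X U \<and> Delta02_colorable X A U} \<subseteq> (\<Union>n. V n)"
  proof
    fix x assume "x \<in> \<Union>{U. openin X U \<and> Delta02_colorable X A U}"
    then obtain U where U: "openin X U" "Delta02_colorable X A U" "x \<in> U"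
      by blast
    then obtain W where "W \<in> \<B>" "x \<in> W" "W \<subseteq> U"
      using \<B>_base by blast
    moreover have "Delta02_colorable X A W"
      using Delta02_colorable_openin_subset[OF met U(2)] \<B>_open \<open>W \<in> \<B>\<close> \<open>W \<subseteq> U\<close> by blast
    ultimately have "W \<in> range V"
      unfolding range_V \<V>_def by blast
    then show "x \<in> (\<Union>n. V n)"
      using \<open>x \<in> W\<close> by blast
  qed
  moreover have "(\<Union>n. V n) \<subseteq> \<Union>{U. openin X U \<and> Delta02_colorable X A U}"
    using good_V by blast
  ultimately show ?thesis
    using Delta02_colorable_UN[OF met] good_V by (metis subset_antisym)
qed

lemma Delta02_colorable_extend:
  assumes met: "metrizable_space X"
    and G: "openin X G" "Delta02_colorable X A G" and U: "openin X U"
    and no_edge: "\<And>x y. (x, y) \<in> A \<Longrightarrow> x \<in> U - G \<Longrightarrow> y \<in> U - G \<Longrightarrow> False"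
  shows "Delta02_colorable X A U"
proof -
  obtain c :: "_ \<Rightarrow> nat" where c_classes: "\<And>n. Delta02_in X {x \<in> G. c x = n}"
    and c_proper: "\<forall>(x, y)\<in>A. x \<in> G \<longrightarrow> y \<in> G \<longrightarrow> c x \<noteq> c y"
    using G(2) unfolding Delta02_colorable_def by blast
  define c' where "c' x = (if x \<in> G then Suc (c x) else 0)" for x
  have "Delta02_in X {x \<in> U. c' x = k}" for k
  proof (cases k)
    case 0
    then have "{x \<in> U. c' x = k} = U \<inter> (topspace X - G)"
      using openin_subset[OF U] by (auto simp: c'_def)
    then show ?thesis
      using Delta02_in_Int[OF Delta02_in_openin[OF met U] Delta02_in_closedin[OF met]]
        closedin_diff[OF closedin_topspace G(1)] by simp
  next
    case (Suc k')
    then have "{x \<in> U. c' x = k} = U \<inter> {x \<in> G. c x = k'}"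
      by (auto simp: c'_def)
    then show ?thesis
      using Delta02_in_Int[OF Delta02_in_openin[OF met U] c_classes] by simp
  qed
  moreover have "\<forall>(x, y)\<in>A. x \<in> U \<longrightarrow> y \<in> U \<longrightarrow> c' x \<noteq> c' y"
    using c_proper no_edge by (fastforce simp: c'_def split: if_splits)
  ultimately show ?thesis
    unfolding Delta02_colorable_def by blast
qed

lemma Delta02_colorable_or_dense_edges:
  assumes met: "metrizable_space X" and sep: "separable_space X"
  shows "Delta02_colorable X A (topspace X)
     \<or> (\<exists>F. F \<subseteq> topspace X \<and> F \<noteq> {} \<and>
           (\<forall>x\<in>F. \<forall>U. openin X U \<and> x \<in> U \<longrightarrow> (\<exists>(a, b)\<in>A. a \<in> U \<inter> F \<and> b \<in> U \<inter> F)))"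
proof -
  define G where "G = \<Union>{U. openin X U \<and> Delta02_colorable X A U}"
  have G: "openin X G" "Delta02_colorable X A G"
    unfolding G_def using Delta02_colorable_largest_open[OF met sep] by auto
  have "\<exists>(a, b)\<in>A. a \<in> U \<inter> (topspace X - G) \<and> b \<in> U \<inter> (topspace X - G)"
    if "x \<in> topspace X - G" "openin X U" "x \<in> U" for x U
  proof (rule ccontr)
    assume "\<not> ?thesis"
    then have "Delta02_colorable X A U"
      using Delta02_colorable_extend[OF met G \<open>openin X U\<close>] openin_subset[OF \<open>openin X U\<close>] by blast
    then show False
      using that unfolding G_def by blast
  qed
  moreover have "G = topspace X \<or> topspace X - G \<noteq> {}"
    using openin_subset[OF G(1)] by blast
  ultimately show ?thesis
    using G(2) by blast
qed

lemma (in Metric_space) geometric_chain_bound: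
  assumes "\<And>n. x n \<in> M" "\<And>n. d (x n) (x (Suc n)) \<le> (1/2) ^ n" "m \<le> n"
  shows "d (x m) (x n) \<le> 2 * (1/2) ^ m"
proof -
  have "d (x m) (x n) \<le> 2 * (1/2) ^ m - 2 * (1/2) ^ n"
    using \<open>m \<le> n\<close>
  proof (induction n rule: dec_induct)
    case (step n)
    have "d (x m) (x (Suc n)) \<le> d (x m) (x n) + d (x n) (x (Suc n))"
      using assms(1) triangle by blast
    then show ?case
      using step.IH assms(2)[of n] by simp
  qed (simp add: assms(1))
  moreover have "(0::real) \<le> (1/2) ^ n"
    by simp
  ultimately show ?thesis
    by linarith
qed

lemma (in Metric_space) geometric_uniformly_Cauchy:
  assumes g_M: "\<And>n x. x \<in> S \<Longrightarrow> g n x \<in> M"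
    and step: "\<And>n x. x \<in> S \<Longrightarrow> d (g n x) (g (Suc n) x) \<le> (1/2) ^ n" and "\<epsilon> > 0"
  shows "\<exists>N. \<forall>m n x. N \<le> m \<longrightarrow> N \<le> n \<longrightarrow> x \<in> S \<longrightarrow> d (g m x) (g n x) < \<epsilon>"
proof -
  obtain N where N: "(1/2::real) ^ N < \<epsilon>/2"
    using real_arch_pow_inv[of "\<epsilon>/2" "1/2"] \<open>\<epsilon> > 0\<close> by auto
  have "d (g m x) (g n x) < \<epsilon>" if "N \<le> m" "N \<le> n" and x: "x \<in> S" for m n x
  proof -
    have chain: "d (g i x) (g j x) \<le> 2 * (1/2) ^ i" if "i \<le> j" for i j
      using geometric_chain_bound[of "\<lambda>n. g n x" i j] g_M[OF x] step[OF x] that by blast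
    have "d (g m x) (g n x) \<le> 2 * (1/2) ^ min m n"
      using chain[of m n] chain[of n m] commute[of "g m x" "g n x"] g_M[OF x]
      by (cases "m \<le> n") (auto simp: min_def)
    moreover have "(1/2::real) ^ min m n \<le> (1/2) ^ N"
      using that by (simp add: power_decreasing)
    ultimately show ?thesis
      using N by linarith
  qed
  then show ?thesis
    by blast
qed

lemma (in Metric_space) continuous_map_geometric_limit:
  assumes "mcomplete" and cont: "\<And>n. continuous_map X mtopology (g n)"
    and step: "\<And>n x. x \<in> topspace X \<Longrightarrow> d (g n x) (g (Suc n) x) \<le> (1/2) ^ n"
  obtains f where "continuous_map X mtopology f"
    "\<And>x N. x \<in> topspace X \<Longrightarrow> (\<And>n. N \<le> n \<Longrightarrow> g n x = g N x) \<Longrightarrow> f x = g N x"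
proof -
  have g_M: "g n x \<in> M" if "x \<in> topspace X" for n x
    using cont that by (auto simp: continuous_map_def)
  have "\<forall>\<^sub>F n in sequentially. continuous_map X mtopology (g n)"
    using cont by simp
  then obtain f where f: "continuous_map X mtopology f"
    and lim: "\<And>\<epsilon>. 0 < \<epsilon> \<Longrightarrow> \<forall>\<^sub>F n in sequentially. \<forall>x\<in>topspace X. d (g n x) (f x) < \<epsilon>"
    by (rule continuous_map_uniformly_Cauchy_limit[OF \<open>mcomplete\<close> _ geometric_uniformly_Cauchy[OF g_M step]])
      auto
  have "f x = g N x" if x: "x \<in> topspace X" and stable: "\<And>n. N \<le> n \<Longrightarrow> g n x = g N x" for x N
  proof -
    have "d (g N x) (f x) < \<epsilon>" if "\<epsilon> > 0" for \<epsilon>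
    proof -
      obtain n0 where "\<forall>n\<ge>n0. \<forall>x\<in>topspace X. d (g n x) (f x) < \<epsilon>"
        using lim[OF \<open>\<epsilon> > 0\<close>] unfolding eventually_sequentially by blast
      then have "d (g (max N n0) x) (f x) < \<epsilon>"
        using x by simp
      then show ?thesis
        using stable[of "max N n0"] by simp
    qed
    then have "d (g N x) (f x) = 0"
      by (metis nonneg less_eq_real_def not_less)
    moreover have "f x \<in> M"
      using f x by (auto simp: continuous_map_def)
    ultimately show ?thesis
      using g_M[OF x] by simp
  qed
  then show thesis
    using that f by blast
qed

definition same_cells :: "(nat \<Rightarrow> nat \<Rightarrow> 'a set) \<Rightarrow> nat \<Rightarrow> 'a \<Rightarrow> 'a \<Rightarrow> bool" where
  "same_cells Q q x y \<longleftrightarrow> (\<forall>r<q. \<forall>p. x \<in> Q r p \<longleftrightarrow> y \<in> Q r p)"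

lemma same_cells_0 [simp]: "same_cells Q 0 x y"
  by (simp add: same_cells_def)

lemma same_cells_refl [simp]: "same_cells Q q x x"
  by (simp add: same_cells_def)

lemma same_cells_Suc:
  "same_cells Q (Suc q) x y \<longleftrightarrow> same_cells Q q x y \<and> (\<forall>p. x \<in> Q q p \<longleftrightarrow> y \<in> Q q p)"
  unfolding same_cells_def using less_Suc_eq by auto

text \<open>\<open>Q q\<close> is the partition \<open>(O\<^sup>p\<^sub>q)\<^sub>p\<close> witnessing that \<open>C\<close> is comparing.\<close>

locale comparing_partitions =
  fixes XX :: "'a topology" and C Q :: "nat \<Rightarrow> nat \<Rightarrow> 'a set"
  assumes openin_Q: "openin XX (Q q p)"
    and disjoint_Q: "p \<noteq> p' \<Longrightarrow> Q q p \<inter> Q q p' = {}"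
    and Union_Q: "(\<Union>p. Q q p) = topspace XX"
    and C_pair_subset_Q: "q < i \<Longrightarrow> \<exists>p. C 0 i \<union> C 1 i \<subseteq> Q q p"
    and C_subset_Q: "i \<le> q \<Longrightarrow> e < 2 \<Longrightarrow> C e i \<subseteq> Q q (2 * i + e)"

lemma comparing_imp_partitions:
  assumes "comparing XX C"
  obtains Q where "comparing_partitions XX C Q"
proof -
  from choice[OF assms[unfolded comparing_def]] obtain Q
    where Q: "\<forall>q. (\<forall>p. openin XX (Q q p) \<and> closedin XX (Q q p)) \<and>
        (\<forall>p p'. p \<noteq> p' \<longrightarrow> Q q p \<inter> Q q p' = {}) \<and>
        (\<Union>p. Q q p) = topspace XX \<and>
        (\<forall>i. (q < i \<longrightarrow> (\<exists>p. C 0 i \<union> C 1 i \<subseteq> Q q p)) \<and>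
             (i \<le> q \<longrightarrow> (\<forall>e<2. C e i \<subseteq> Q q (2 * i + e))))"
    by (elim exE) (erule that)
  have "comparing_partitions XX C Q"
    by unfold_locales (use Q in simp_all)
  then show thesis
    by (rule that)
qed

context comparing_partitions
begin

lemma C_subset_topspace: "e < 2 \<Longrightarrow> C e i \<subseteq> topspace XX"
  using C_subset_Q[of i i e] openin_subset[OF openin_Q] by blast

lemma same_cells_C:
  assumes "x \<in> C 0 q \<union> C 1 q" "y \<in> C 0 q \<union> C 1 q"
  shows "same_cells Q q x y"
  unfolding same_cells_def
proof (intro allI impI)
  fix r p assume "r < q"
  then obtain p0 where "C 0 q \<union> C 1 q \<subseteq> Q r p0"
    using C_pair_subset_Q by blast
  then show "x \<in> Q r p \<longleftrightarrow> y \<in> Q r p"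
    using assms disjoint_Q[of p p0 r] by (cases "p = p0") auto
qed

lemma C_avoids_later_Q:
  assumes "i < q" "e < 2" "x \<in> C e i"
  shows "x \<notin> Q q (2 * q) \<union> Q q (2 * q + 1)"
proof -
  have "x \<in> Q q (2 * i + e)"
    using C_subset_Q[of i q e] assms by auto
  then show ?thesis
    using assms disjoint_Q[of "2 * i + e" "2 * q" q] disjoint_Q[of "2 * i + e" "2 * q + 1" q] by auto
qed

lemma C_in_own_pieces:
  "x \<in> C 0 q \<Longrightarrow> x \<in> Q q (2 * q)" "y \<in> C 1 q \<Longrightarrow> y \<in> Q q (2 * q + 1) \<and> y \<notin> Q q (2 * q)"
  using C_subset_Q[of q q 0] C_subset_Q[of q q 1] disjoint_Q[of "2 * q" "2 * q + 1" q] by auto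

lemma openin_cell:
  assumes "x \<in> topspace XX"
  shows "openin XX {y \<in> topspace XX. same_cells Q q y x}"
proof (induction q)
  case (Suc q)
  obtain p where p: "x \<in> Q q p"
    using assms Union_Q[of q] by blast
  have same_piece: "y \<in> Q q p' \<longleftrightarrow> x \<in> Q q p'" if "y \<in> Q q p" for y p'
    using p that disjoint_Q[of p p' q] by (cases "p = p'") auto
  have "{y \<in> topspace XX. same_cells Q (Suc q) y x} = {y \<in> topspace XX. same_cells Q q y x} \<inter> Q q p"
  proof (intro set_eqI iffI)
    fix y assume "y \<in> {y \<in> topspace XX. same_cells Q (Suc q) y x}"
    then show "y \<in> {y \<in> topspace XX. same_cells Q q y x} \<inter> Q q p"
      using p by (simp add: same_cells_Suc)
  next
    fix y assume "y \<in> {y \<in> topspace XX. same_cells Q q y x} \<inter> Q q p"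
    then show "y \<in> {y \<in> topspace XX. same_cells Q (Suc q) y x}"
      using same_piece[of y] by (simp add: same_cells_Suc)
  qed
  then show ?case
    using Suc.IH openin_Q by (simp add: openin_Int)
qed simp

lemma continuous_map_constant_on_cells:
  assumes "h \<in> topspace XX \<rightarrow> topspace Y" and h_cells: "\<And>x y. same_cells Q q x y \<Longrightarrow> h x = h y"
  shows "continuous_map XX Y h"
  unfolding continuous_map_def
proof (intro conjI allI impI assms(1))
  fix U assume "openin Y U"
  show "openin XX {x \<in> topspace XX. h x \<in> U}"
  proof (subst openin_subopen, intro ballI)
    fix x assume x: "x \<in> {x \<in> topspace XX. h x \<in> U}"
    have "{y \<in> topspace XX. same_cells Q q y x} \<subseteq> {x \<in> topspace XX. h x \<in> U}"
      using x h_cells by auto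
    moreover have "x \<in> {y \<in> topspace XX. same_cells Q q y x}"
      using x by simp
    moreover have "openin XX {y \<in> topspace XX. same_cells Q q y x}"
      using x openin_cell by simp
    ultimately show "\<exists>T. openin XX T \<and> x \<in> T \<and> T \<subseteq> {x \<in> topspace XX. h x \<in> U}"
      by blast
  qed
qed

text \<open>
  The point \<open>s\<close> names the level-\<open>q\<close> cell containing \<open>C\<^sup>0\<^sub>q \<union> C\<^sup>1\<^sub>q\<close>; if that set is empty,
  \<open>s\<close> is arbitrary and the construction is still valid.
\<close>

lemma refine_step:
  assumes "Metric_space M d" "F \<subseteq> M"
    and edges: "\<forall>v\<in>F. \<forall>\<epsilon>>0. \<exists>(a, b)\<in>A. a \<in> F \<and> b \<in> F \<and> d v a < \<epsilon> \<and> d v b < \<epsilon>"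
    and "\<epsilon> > 0" and h_F: "\<And>x. h x \<in> F" and h_cells: "\<And>x y. same_cells Q q x y \<Longrightarrow> h x = h y"
  obtains h' where "\<And>x. h' x \<in> F" "\<And>x y. same_cells Q (Suc q) x y \<Longrightarrow> h' x = h' y"
    "\<And>x. d (h x) (h' x) < \<epsilon>" "\<And>x. x \<notin> Q q (2 * q) \<union> Q q (2 * q + 1) \<Longrightarrow> h' x = h x"
    "\<And>x y. x \<in> C 0 q \<Longrightarrow> y \<in> C 1 q \<Longrightarrow> (h' x, h' y) \<in> A"
proof -
  define s where "s = (SOME s. s \<in> C 0 q \<union> C 1 q)"
  obtain a b where ab: "(a, b) \<in> A" "a \<in> F" "b \<in> F" "d (h s) a < \<epsilon>" "d (h s) b < \<epsilon>"
    using edges h_F \<open>\<epsilon> > 0\<close> by blast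
  define h' where "h' x = (if same_cells Q q x s \<and> x \<in> Q q (2 * q) then a
      else if same_cells Q q x s \<and> x \<in> Q q (2 * q + 1) then b else h x)" for x
  show thesis
  proof (rule that)
    show "h' x \<in> F" for x
      using ab h_F by (simp add: h'_def)
    show "h' x = h' y" if "same_cells Q (Suc q) x y" for x y
    proof -
      have "same_cells Q q x y" and "\<And>p. x \<in> Q q p \<longleftrightarrow> y \<in> Q q p"
        using that by (auto simp: same_cells_Suc)
      moreover from this(1) have "same_cells Q q x s \<longleftrightarrow> same_cells Q q y s"
        by (auto simp: same_cells_def)
      ultimately show ?thesis
        using h_cells by (simp add: h'_def)
    qed
    show "d (h x) (h' x) < \<epsilon>" for x
    proof -
      have "d (h x) (h x) = 0"
        using Metric_space.zero[OF \<open>Metric_space M d\<close>] h_F \<open>F \<subseteq> M\<close> by blast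
      then show ?thesis
        using ab h_cells[of x s] \<open>\<epsilon> > 0\<close> by (auto simp: h'_def)
    qed
    show "h' x = h x" if "x \<notin> Q q (2 * q) \<union> Q q (2 * q + 1)" for x
      using that by (simp add: h'_def)
    show "(h' x, h' y) \<in> A" if "x \<in> C 0 q" "y \<in> C 1 q" for x y
    proof -
      have "s \<in> C 0 q \<union> C 1 q"
        unfolding s_def using that by (metis UnI1 someI)
      then have "same_cells Q q x s" "same_cells Q q y s"
        using same_cells_C that by blast+
      then show ?thesis
        using ab(1) C_in_own_pieces that by (simp add: h'_def)
    qed
  qed
qed

lemma approximating_sequence:
  assumes "Metric_space M d" "F \<subseteq> M" "z \<in> F"
    and edges: "\<forall>v\<in>F. \<forall>\<epsilon>>0. \<exists>(a, b)\<in>A. a \<in> F \<and> b \<in> F \<and> d v a < \<epsilon> \<and> d v b < \<epsilon>"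
  obtains g :: "nat \<Rightarrow> 'a \<Rightarrow> 'b"
  where "\<And>q x. g q x \<in> F" "\<And>q x y. same_cells Q q x y \<Longrightarrow> g q x = g q y"
    "\<And>q x. d (g q x) (g (Suc q) x) < (1/2) ^ q"
    "\<And>q x. x \<notin> Q q (2 * q) \<union> Q q (2 * q + 1) \<Longrightarrow> g (Suc q) x = g q x"
    "\<And>q x y. x \<in> C 0 q \<Longrightarrow> y \<in> C 1 q \<Longrightarrow> (g (Suc q) x, g (Suc q) y) \<in> A"
proof -
  define valid where "valid q h \<longleftrightarrow> (\<forall>x. h x \<in> F) \<and> (\<forall>x y. same_cells Q q x y \<longrightarrow> h x = h y)"
    for q and h :: "'a \<Rightarrow> 'b"
  define refines where "refines q h h' \<longleftrightarrow> (\<forall>x. d (h x) (h' x) < (1/2) ^ q) \<and>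
      (\<forall>x. x \<notin> Q q (2 * q) \<union> Q q (2 * q + 1) \<longrightarrow> h' x = h x) \<and>
      (\<forall>x\<in>C 0 q. \<forall>y\<in>C 1 q. (h' x, h' y) \<in> A)" for q and h h' :: "'a \<Rightarrow> 'b"
  have "\<exists>g. \<forall>q. valid q (g q) \<and> refines q (g q) (g (Suc q))"
  proof (rule dependent_nat_choice)
    show "\<exists>h. valid 0 h"
      using \<open>z \<in> F\<close> unfolding valid_def by (intro exI[of _ "\<lambda>_. z"]) simp
    show "\<exists>h'. valid (Suc q) h' \<and> refines q h h'" if valid: "valid q h" for h q
    proof -
      obtain h' where "\<And>x. h' x \<in> F" "\<And>x y. same_cells Q (Suc q) x y \<Longrightarrow> h' x = h' y"
        "\<And>x. d (h x) (h' x) < (1/2) ^ q" "\<And>x. x \<notin> Q q (2 * q) \<union> Q q (2 * q + 1) \<Longrightarrow> h' x = h x"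
        "\<And>x y. x \<in> C 0 q \<Longrightarrow> y \<in> C 1 q \<Longrightarrow> (h' x, h' y) \<in> A"
        by (rule refine_step[OF assms(1,2) edges, of "(1/2) ^ q" h q]) (use valid in \<open>auto simp: valid_def\<close>)
      then show ?thesis
        unfolding valid_def refines_def by blast
    qed
  qed
  then obtain g where g: "\<forall>q. valid q (g q) \<and> refines q (g q) (g (Suc q))"
    by blast
  show thesis
    by (rule that[of g]) (use g in \<open>auto simp: valid_def refines_def\<close>)
qed

lemma continuous_map_realising_close_edges:
  assumes ms: "Metric_space M d" "Metric_space.mcomplete M d" and "F \<subseteq> M" "z \<in> F"
    and edges: "\<forall>v\<in>F. \<forall>\<epsilon>>0. \<exists>(a, b)\<in>A. a \<in> F \<and> b \<in> F \<and> d v a < \<epsilon> \<and> d v b < \<epsilon>"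
  shows "\<exists>f. continuous_map XX (Metric_space.mtopology M d) f \<and>
            (\<forall>i. \<forall>x\<in>C 0 i. \<forall>y\<in>C 1 i. (f x, f y) \<in> A)"
proof -
  interpret M: Metric_space M d by (rule ms(1))
  obtain g where g_F: "\<And>q x. g q x \<in> F" and g_cells: "\<And>q x y. same_cells Q q x y \<Longrightarrow> g q x = g q y"
    and g_step: "\<And>q x. d (g q x) (g (Suc q) x) < (1/2) ^ q"
    and g_keep: "\<And>q x. x \<notin> Q q (2 * q) \<union> Q q (2 * q + 1) \<Longrightarrow> g (Suc q) x = g q x"
    and g_edge: "\<And>q x y. x \<in> C 0 q \<Longrightarrow> y \<in> C 1 q \<Longrightarrow> (g (Suc q) x, g (Suc q) y) \<in> A"
    by (fact approximating_sequence[OF ms(1) \<open>F \<subseteq> M\<close> \<open>z \<in> F\<close> edges])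
  have g_cont: "continuous_map XX M.mtopology (g n)" for n
    using g_F g_cells \<open>F \<subseteq> M\<close> by (intro continuous_map_constant_on_cells) auto
  have g_step': "d (g n x) (g (Suc n) x) \<le> (1/2) ^ n" for n x
    using g_step less_imp_le by blast
  obtain f where f: "continuous_map XX M.mtopology f"
    and f_stable: "\<And>x N. x \<in> topspace XX \<Longrightarrow> (\<And>n. N \<le> n \<Longrightarrow> g n x = g N x) \<Longrightarrow> f x = g N x"
    by (fact M.continuous_map_geometric_limit[OF \<open>M.mcomplete\<close> g_cont g_step'])
  have g_stable: "g n x = g (Suc i) x" if "x \<in> C e i" "e < 2" "Suc i \<le> n" for x e i n
    using \<open>Suc i \<le> n\<close>
  proof (induction n rule: dec_induct)
    case (step n)
    then show ?case
      using g_keep C_avoids_later_Q[OF _ \<open>e < 2\<close> \<open>x \<in> C e i\<close>, of n] by simp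
  qed simp
  have f_C: "f x = g (Suc i) x" if x: "x \<in> C e i" "e < 2" for x e i
  proof (rule f_stable)
    show "x \<in> topspace XX"
      using C_subset_topspace x by blast
    show "g n x = g (Suc i) x" if "Suc i \<le> n" for n
      using g_stable[OF x that] .
  qed
  have "(f x, f y) \<in> A" if "x \<in> C 0 i" "y \<in> C 1 i" for i x y
    using f_C[of x 0 i] f_C[of y 1 i] that g_edge by simp
  then show ?thesis
    using f by blast
qed

lemma continuous_map_realising_edges:
  assumes "completely_metrizable_space X" "F \<subseteq> topspace X" "F \<noteq> {}"
    and dense: "\<forall>x\<in>F. \<forall>U. openin X U \<and> x \<in> U \<longrightarrow> (\<exists>(a, b)\<in>A. a \<in> U \<inter> F \<and> b \<in> U \<inter> F)"
  shows "\<exists>f. continuous_map XX X f \<and> (\<forall>i. \<forall>x\<in>C 0 i. \<forall>y\<in>C 1 i. (f x, f y) \<in> A)"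
proof -
  obtain M d where ms: "Metric_space M d" "Metric_space.mcomplete M d"
    and X: "X = Metric_space.mtopology M d"
    using assms(1) unfolding completely_metrizable_space_def by blast
  interpret M: Metric_space M d by (rule ms(1))
  have "F \<subseteq> M"
    using assms(2) unfolding X by simp
  have "\<forall>v\<in>F. \<forall>\<epsilon>>0. \<exists>(a, b)\<in>A. a \<in> F \<and> b \<in> F \<and> d v a < \<epsilon> \<and> d v b < \<epsilon>"
  proof (intro ballI allI impI)
    fix v and \<epsilon> :: real assume "v \<in> F" "\<epsilon> > 0"
    then show "\<exists>(a, b)\<in>A. a \<in> F \<and> b \<in> F \<and> d v a < \<epsilon> \<and> d v b < \<epsilon>"
      using dense[unfolded X, rule_format, of v "M.mball v \<epsilon>"] \<open>F \<subseteq> M\<close> by (force simp: M.commute)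
  qed
  moreover obtain z where "z \<in> F"
    using \<open>F \<noteq> {}\<close> by blast
  ultimately show ?thesis
    unfolding X using continuous_map_realising_close_edges[OF ms \<open>F \<subseteq> M\<close>] by blast
qed

end

theorem lemma4p4:
  fixes XX :: "'a topology" and X :: "'b topology"
    and C :: "nat \<Rightarrow> nat \<Rightarrow> 'a set" and A :: "('b \<times> 'b) set"
  assumes "Polish_space XX" and "XX dim_le 0"
    and "one_disjoint XX C" and "comparing XX C"
    and "Polish_space X"
    and "A \<subseteq> topspace X \<times> topspace X"
  shows "(\<exists>c :: 'b \<Rightarrow> nat.
            (\<forall>n. Delta02_in X {x \<in> topspace X. c x = n}) \<and>
            (\<forall>(x, y) \<in> A. c x \<noteq> c y))
       \<or> (\<exists>f. continuous_map XX X f \<and>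
            (\<forall>i. \<forall>x \<in> C 0 i. \<forall>y \<in> C 1 i. (f x, f y) \<in> A))"
proof -
  have "completely_metrizable_space X" "separable_space X"
    using \<open>Polish_space X\<close> unfolding Polish_space_def by blast+
  then have "metrizable_space X"
    using completely_metrizable_imp_metrizable_space by blast
  obtain Q where "comparing_partitions XX C Q"
    using comparing_imp_partitions[OF \<open>comparing XX C\<close>] .
  from Delta02_colorable_or_dense_edges[OF \<open>metrizable_space X\<close> \<open>separable_space X\<close>, of A]
  show ?thesis
  proof (elim disjE exE conjE)
    assume "Delta02_colorable X A (topspace X)"
    then show ?thesis
      using \<open>A \<subseteq> topspace X \<times> topspace X\<close> unfolding Delta02_colorable_def by blast
  next
    fix F assume "F \<subseteq> topspace X" "F \<noteq> {}"
      "\<forall>x\<in>F. \<forall>U. openin X U \<and> x \<in> U \<longrightarrow> (\<exists>(a, b)\<in>A. a \<in> U \<inter> F \<and> b \<in> U \<inter> F)"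
    then show ?thesis
      using comparing_partitions.continuous_map_realising_edges[OF \<open>comparing_partitions XX C Q\<close>
          \<open>completely_metrizable_space X\<close>] by blast
  qed
qed

end
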